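(* Let $G$ be a connected graph (finite, simple, undirected) together with a partial proper $2$-coloring of its vertices, i.e.\ an assignment of one of two colors to some (possibly none, possibly all) of the vertices of $G$ such that no two adjacent colored vertices receive the same color. Then this partial $2$-coloring can be extended to a total proper $2$-coloring of $V(G)$ (an assignment of one of the two colors to every vertex, agreeing with the given colors on the precolored vertices, such that adjacent vertices receive distinct colors) if and only if all of the following conditions hold: (i) there is no even induced path of $G$ whose only colored vertices are its two endpoints and these endpoints are colored with distinct colors; (ii) there is no odd induced path of $G$ whose only colored vertices are its two endpoints and these endpoints are colored with the same color; (iii) there is no induced odd cycle of $G$ all of whose vertices are uncolored; (iv) there is no induced odd cycle of $G$ with exactly one colored vertex; (v) there is no induced odd cycle of $G$ with exactly two colored vertices, these two vertices being consecutive on the cycle.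
   Context: The length of a path or cycle is its number of edges; a path or cycle is odd or even according to the parity of its length. A path or cycle is induced if no edge of $G$ joins two non-consecutive vertices of it. *)

theory Defs
  imports Main
begin

definition simple_graph :: "'a set \<Rightarrow> ('a \<Rightarrow> 'a \<Rightarrow> bool) \<Rightarrow> bool" where
  "simple_graph V E \<longleftrightarrow> finite V \<and> (\<forall>u v. E u v \<longrightarrow> u \<in> V \<and> v \<in> V)
     \<and> (\<forall>u v. E u v \<longrightarrow> E v u) \<and> (\<forall>u. \<not> E u u)"

definition connected_graph :: "'a set \<Rightarrow> ('a \<Rightarrow> 'a \<Rightarrow> bool) \<Rightarrow> bool" where
  "connected_graph V E \<longleftrightarrow> (\<forall>u\<in>V. \<forall>v\<in>V. E\<^sup>*\<^sup>* u v)"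

text \<open>Partial 2-colouring: colours are the two values of bool; None = uncoloured.\<close>
definition proper_partial_2col :: "'a set \<Rightarrow> ('a \<Rightarrow> 'a \<Rightarrow> bool) \<Rightarrow> ('a \<Rightarrow> bool option) \<Rightarrow> bool" where
  "proper_partial_2col V E c \<longleftrightarrow>
     (\<forall>u v. E u v \<longrightarrow> c u \<noteq> None \<longrightarrow> c v \<noteq> None \<longrightarrow> c u \<noteq> c v)"

definition extends_to_proper_2col :: "'a set \<Rightarrow> ('a \<Rightarrow> 'a \<Rightarrow> bool) \<Rightarrow> ('a \<Rightarrow> bool option) \<Rightarrow> bool" where
  "extends_to_proper_2col V E c \<longleftrightarrow>
     (\<exists>f :: 'a \<Rightarrow> bool. (\<forall>v\<in>V. c v \<noteq> None \<longrightarrow> c v = Some (f v))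
        \<and> (\<forall>u v. E u v \<longrightarrow> f u \<noteq> f v))"

text \<open>Induced path given by its vertex list; its length (number of edges) is length xs - 1.\<close>
definition induced_path :: "'a set \<Rightarrow> ('a \<Rightarrow> 'a \<Rightarrow> bool) \<Rightarrow> 'a list \<Rightarrow> bool" where
  "induced_path V E xs \<longleftrightarrow> xs \<noteq> [] \<and> distinct xs \<and> set xs \<subseteq> V
     \<and> (\<forall>i. i + 1 < length xs \<longrightarrow> E (xs!i) (xs!(i+1)))
     \<and> (\<forall>i j. i < length xs \<longrightarrow> j < length xs \<longrightarrow> E (xs!i) (xs!j) \<longrightarrow> j = i + 1 \<or> i = j + 1)"

text \<open>Induced cycle given by its cyclic vertex list; its length is length xs.\<close>
definition induced_cycle :: "'a set \<Rightarrow> ('a \<Rightarrow> 'a \<Rightarrow> bool) \<Rightarrow> 'a list \<Rightarrow> bool" where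
  "induced_cycle V E xs \<longleftrightarrow> 3 \<le> length xs \<and> distinct xs \<and> set xs \<subseteq> V
     \<and> (\<forall>i < length xs. E (xs!i) (xs!((i+1) mod length xs)))
     \<and> (\<forall>i j. i < length xs \<longrightarrow> j < length xs \<longrightarrow> E (xs!i) (xs!j) \<longrightarrow>
            j = (i + 1) mod length xs \<or> i = (j + 1) mod length xs)"

definition colored_vertices :: "('a \<Rightarrow> bool option) \<Rightarrow> 'a list \<Rightarrow> 'a set" where
  "colored_vertices c xs = {v \<in> set xs. c v \<noteq> None}"

end

theory Submission
  imports Defs
begin

text \<open>
  Call a walk conflicting if it is closed of odd length, or if it joins two precolored vertices
  and its parity contradicts their colors (odd length between equal colors, even length between
  different ones). A proper extension alternates colors along every walk, so there is no
  conflicting walk. Conversely, in a connected graph without conflicting walks, coloring each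
  vertex by the parity of a walk from a fixed root (precolored, if possible) is well defined and
  extends the precoloring.

  Each of the five configurations is a conflicting walk. Conversely, take a shortest conflicting
  walk, preferring closed ones. Cutting it at a repeated vertex, along a chord, or at an interior
  precolored vertex yields two shorter walks one of which is conflicting again. Hence a shortest
  closed one is an induced odd cycle with at most one precolored vertex, and a shortest open one
  is an induced path with uncolored interior or, if its ends are adjacent, an induced odd cycle
  whose precolored vertices are two consecutive ones.
\<close>

section \<open>Walks\<close>

definition walk :: "('a \<Rightarrow> 'a \<Rightarrow> bool) \<Rightarrow> 'a list \<Rightarrow> bool" where
  "walk E xs \<longleftrightarrow> xs \<noteq> [] \<and> successively E xs"

lemma walk_singleton [simp]: "walk E [x]"
  by (simp add: walk_def)

lemma walk_Cons_Cons [simp]: "walk E (x # y # xs) \<longleftrightarrow> E x y \<and> walk E (y # xs)"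
  by (simp add: walk_def)

lemma walk_append_Cons:
  "walk E (xs @ v # ys) \<longleftrightarrow> walk E (xs @ [v]) \<and> walk E (v # ys)"
  by (auto simp: walk_def successively_append_iff successively_Cons)

lemma walk_join:
  assumes "walk E xs" "walk E ys" "last xs = hd ys"
  shows "walk E (xs @ tl ys)"
proof -
  have "xs = butlast xs @ [last xs]" using assms(1) by (simp add: walk_def)
  moreover have "ys = last xs # tl ys" using assms(2,3) by (simp add: walk_def)
  ultimately show ?thesis
    using assms walk_append_Cons[of E "butlast xs" "last xs" "tl ys"] by (metis append_assoc append_Cons append_Nil)
qed

lemma walk_rev:
  assumes "symp E"
  shows "walk E (rev xs) \<longleftrightarrow> walk E xs"
proof -
  have "(\<lambda>x y. E y x) = E" using assms by (auto intro!: ext simp: symp_def)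
  then show ?thesis by (metis walk_def successively_rev rev_is_Nil_conv)
qed

lemma walk_conv_nth:
  "walk E xs \<longleftrightarrow> xs \<noteq> [] \<and> (\<forall>i. Suc i < length xs \<longrightarrow> E (xs ! i) (xs ! Suc i))"
  by (simp add: walk_def successively_conv_nth)

lemma rtranclp_imp_walk:
  assumes "E\<^sup>*\<^sup>* u v"
  obtains xs where "walk E xs" "hd xs = u" "last xs = v"
  using assms
proof (induction arbitrary: thesis rule: rtranclp_induct)
  case base
  then show ?case using walk_singleton by fastforce
next
  case (step v w)
  then obtain xs where "walk E xs" "hd xs = u" "last xs = v" by blast
  then show ?case
    using step.hyps(2) walk_join[of E xs "[v, w]"] step.prems[of "xs @ [w]"]
    by (auto simp: walk_def)
qed

lemma walk_set_subset:
  assumes "simple_graph V E" "walk E xs" "2 \<le> length xs"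
  shows "set xs \<subseteq> V"
proof
  fix x assume "x \<in> set xs"
  then obtain i where i: "i < length xs" "xs ! i = x" by (auto simp: in_set_conv_nth)
  have inV: "E u v \<Longrightarrow> u \<in> V \<and> v \<in> V" for u v
    using assms(1) by (simp add: simple_graph_def)
  show "x \<in> V"
  proof (cases "Suc i < length xs")
    case True
    then show ?thesis using inV assms(2) i by (auto simp: walk_conv_nth)
  next
    case False
    then have "i = Suc (i - 1)" using assms(3) i by simp
    then have "E (xs ! (i - 1)) (xs ! i)" using assms(2) i by (metis walk_conv_nth)
    then show ?thesis using inV i by blast
  qed
qed

lemma walk_rotate:
  assumes "walk E (ys @ zs @ [hd (ys @ zs)])" "zs \<noteq> []"
  shows "walk E (zs @ ys @ [hd zs])"
proof (cases "ys = []")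
  case False
  obtain z zs' where zs: "zs = z # zs'" using assms(2) by (cases zs) auto
  then have "walk E (ys @ [hd zs])" "walk E (zs @ [hd ys])"
    using assms(1) False walk_append_Cons[of E ys z "zs' @ [hd ys]"] by auto
  then have "walk E ((zs @ [hd ys]) @ tl (ys @ [hd zs]))"
    using False assms(2) by (intro walk_join) auto
  moreover have "(zs @ [hd ys]) @ tl (ys @ [hd zs]) = zs @ ys @ [hd zs]"
    using False by (cases ys) auto
  ultimately show ?thesis by simp
qed (use assms in simp)

lemma walk_close_iff:
  assumes "xs \<noteq> []"
  shows "walk E (xs @ [hd xs]) \<longleftrightarrow> (\<forall>i < length xs. E (xs ! i) (xs ! ((i + 1) mod length xs)))"
proof -
  have "(xs @ [hd xs]) ! Suc i = xs ! ((i + 1) mod length xs)" if "i < length xs" for i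
  proof (cases "Suc i < length xs")
    case False
    then have "Suc i = length xs" using that by simp
    then show ?thesis using assms by (simp add: nth_append hd_conv_nth)
  qed (simp add: nth_append)
  then show ?thesis by (auto simp: walk_conv_nth nth_append)
qed

lemma walk_parity:
  assumes "\<And>u v. E u v \<Longrightarrow> f u \<noteq> f v" "walk E xs"
  shows "f (last xs) \<longleftrightarrow> f (hd xs) \<noteq> odd (length xs - 1)"
  using assms(2)
proof (induction xs rule: induct_list012)
  case (3 x y zs)
  then have "f (last (y # zs)) \<longleftrightarrow> f y \<noteq> odd (length zs)" and "f y \<longleftrightarrow> \<not> f x"
    using assms(1)[of x y] by auto
  then show ?case by simp
qed (simp_all add: walk_def)

section \<open>Conflicting walks and extensions\<close>

definition conflict :: "('a \<Rightarrow> bool option) \<Rightarrow> 'a \<Rightarrow> 'a \<Rightarrow> nat \<Rightarrow> bool" where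
  "conflict c u v n \<longleftrightarrow> (u = v \<or> c u \<noteq> None \<and> c v \<noteq> None) \<and> (odd n \<longleftrightarrow> c u = c v)"

definition conflicting_walk :: "('a \<Rightarrow> 'a \<Rightarrow> bool) \<Rightarrow> ('a \<Rightarrow> bool option) \<Rightarrow> 'a list \<Rightarrow> bool" where
  "conflicting_walk E c xs \<longleftrightarrow> walk E xs \<and> conflict c (hd xs) (last xs) (length xs - 1)"

lemma conflict_refl [simp]: "conflict c v v n \<longleftrightarrow> odd n"
  by (simp add: conflict_def)

lemma conflict_split:
  assumes "c u \<noteq> None" "c v \<noteq> None" "c w \<noteq> None" "conflict c u w (m + n)"
  shows "conflict c u v m \<or> conflict c v w n"
  using assms by (auto simp: conflict_def)

lemma conflict_shortcut:
  assumes "conflict c u w n" "even (n + m + k)"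
  shows "conflict c u w m \<or> odd k"
  using assms by (auto simp: conflict_def)

lemma extension_excludes_conflicting_walk:
  assumes "simple_graph V E" "extends_to_proper_2col V E c"
  shows "\<not> conflicting_walk E c xs"
proof
  assume conflicting: "conflicting_walk E c xs"
  obtain f where f: "\<And>v. v \<in> V \<Longrightarrow> c v \<noteq> None \<Longrightarrow> c v = Some (f v)"
    and proper: "\<And>u v. E u v \<Longrightarrow> f u \<noteq> f v"
    using assms(2) unfolding extends_to_proper_2col_def by blast
  have walk: "walk E xs" and conf: "conflict c (hd xs) (last xs) (length xs - 1)"
    using conflicting by (simp_all add: conflicting_walk_def)
  have parity: "f (last xs) \<longleftrightarrow> f (hd xs) \<noteq> odd (length xs - 1)"
    using walk_parity[of E f xs, OF proper walk] .
  show False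
  proof (cases "hd xs = last xs")
    case True
    then have "odd (length xs - 1)" using conf by (metis conflict_refl)
    with parity True show False by simp
  next
    case False
    have "length xs \<noteq> 1" using False by (auto simp: length_Suc_conv)
    moreover have "0 < length xs" using walk by (simp add: walk_def)
    ultimately have "2 \<le> length xs" by linarith
    then have "set xs \<subseteq> V" using walk_set_subset[OF assms(1) walk] by blast
    then have "hd xs \<in> V" "last xs \<in> V" using walk by (auto simp: walk_def)
    moreover have "c (hd xs) \<noteq> None" "c (last xs) \<noteq> None"
      using False conf by (simp_all add: conflict_def)
    ultimately have "c (hd xs) = Some (f (hd xs))" "c (last xs) = Some (f (last xs))"
      using f by blast+
    then have "odd (length xs - 1) \<longleftrightarrow> f (hd xs) = f (last xs)"
      using conf by (simp add: conflict_def)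
    then show False using parity by (cases "f (hd xs)"; cases "f (last xs)") simp_all
  qed
qed

lemma no_conflicting_walk_parity_unique:
  assumes "symp E" "\<And>xs. \<not> conflicting_walk E c xs"
    and "walk E p" "walk E q" "hd p = hd q" "last p = last q"
  shows "odd (length p - 1) \<longleftrightarrow> odd (length q - 1)"
proof -
  have q: "walk E (rev q)" "hd (rev q) = last p" "last (rev q) = hd p" "rev q \<noteq> []"
    using assms(1,4,5,6) walk_rev[of E q] by (auto simp: walk_def hd_rev last_rev)
  define cl where "cl = p @ tl (rev q)"
  have "walk E cl" using walk_join[OF assms(3) q(1)] q(2) by (simp add: cl_def)
  moreover have "hd cl = last cl"
    using q assms(3) by (cases "rev q") (auto simp: cl_def walk_def split: if_split_asm)
  moreover have "length cl - 1 = (length p - 1) + (length q - 1)"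
    using q(4) assms(3) by (cases p) (auto simp: cl_def walk_def)
  ultimately show ?thesis using assms(2)[of cl] by (auto simp: conflicting_walk_def)
qed

lemma no_conflicting_walk_imp_extension:
  assumes "simple_graph V E" "connected_graph V E" "\<And>xs. \<not> conflicting_walk E c xs"
  shows "extends_to_proper_2col V E c"
proof (cases "V = {}")
  case True
  then have "\<not> E u v" for u v using assms(1) by (auto simp: simple_graph_def)
  then show ?thesis by (simp add: extends_to_proper_2col_def True)
next
  case False
  have sym: "symp E" using assms(1) by (auto simp: simple_graph_def symp_def)
  have "\<exists>r\<in>V. (\<exists>v\<in>V. c v \<noteq> None) \<longrightarrow> c r \<noteq> None" using False by blast
  then obtain r where "r \<in> V" and r_colored: "\<And>v. v \<in> V \<Longrightarrow> c v \<noteq> None \<Longrightarrow> c r \<noteq> None"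
    by blast
  have walk_from_r: "\<exists>p. walk E p \<and> hd p = r \<and> last p = v" if "v \<in> V" for v
    using assms(2) \<open>r \<in> V\<close> that rtranclp_imp_walk unfolding connected_graph_def by metis
  define odd_from_r where
    "odd_from_r v \<longleftrightarrow> (\<exists>p. walk E p \<and> hd p = r \<and> last p = v \<and> odd (length p - 1))" for v
  have odd_from_r_iff: "odd_from_r (last p) \<longleftrightarrow> odd (length p - 1)" if "walk E p" "hd p = r" for p
    using that no_conflicting_walk_parity_unique[OF sym assms(3)] unfolding odd_from_r_def by metis
  \<comment> \<open>If nothing is precolored, \<open>the (c r)\<close> is an unspecified but harmless boolean.\<close>
  define f where "f v \<longleftrightarrow> the (c r) \<noteq> odd_from_r v" for v
  show ?thesis unfolding extends_to_proper_2col_def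
  proof (intro exI conjI allI ballI impI)
    fix u v assume "E u v"
    then have "u \<in> V" using assms(1) by (auto simp: simple_graph_def)
    then obtain p where p: "walk E p" "hd p = r" "last p = u" using walk_from_r by blast
    have "walk E (p @ [v])" using walk_join[OF p(1), of "[u, v]"] p(3) \<open>E u v\<close> by simp
    moreover have "hd (p @ [v]) = r" using p by (simp add: walk_def)
    ultimately show "f u \<noteq> f v"
      using odd_from_r_iff[OF p(1,2)] odd_from_r_iff[of "p @ [v]"] p(1,3)
      by (auto simp: f_def walk_def)
  next
    fix v assume "v \<in> V" "c v \<noteq> None"
    then obtain p where p: "walk E p" "hd p = r" "last p = v" using walk_from_r by blast
    have "c r \<noteq> None" using r_colored \<open>v \<in> V\<close> \<open>c v \<noteq> None\<close> .
    moreover have "\<not> conflict c r v (length p - 1)"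
      using assms(3)[of p] p by (simp add: conflicting_walk_def)
    ultimately show "c v = Some (f v)"
      using \<open>c v \<noteq> None\<close> odd_from_r_iff[OF p(1,2)] p(3) by (auto simp: f_def conflict_def)
  qed
qed

lemma extension_iff_no_conflicting_walk:
  assumes "simple_graph V E" "connected_graph V E"
  shows "extends_to_proper_2col V E c \<longleftrightarrow> \<not> (\<exists>xs. conflicting_walk E c xs)"
  using extension_excludes_conflicting_walk no_conflicting_walk_imp_extension assms by blast

section \<open>Induced paths and cycles\<close>

lemma split_list_at_two_positions:
  assumes "i < j" "j < length xs"
  obtains as bs cs where "xs = as @ xs ! i # bs @ xs ! j # cs"
    "length as = i" "length bs = j - Suc i" "length cs = length xs - Suc j"
proof
  let ?ds = "drop (Suc i) xs"
  have "xs = take i xs @ xs ! i # ?ds" using assms by (simp add: id_take_nth_drop)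
  moreover have "?ds = take (j - Suc i) ?ds @ ?ds ! (j - Suc i) # drop (Suc (j - Suc i)) ?ds"
    by (rule id_take_nth_drop) (use assms in simp)
  moreover have "?ds ! (j - Suc i) = xs ! j" "drop (Suc (j - Suc i)) ?ds = drop (Suc j) xs"
    using assms by simp_all
  ultimately show "xs = take i xs @ xs ! i # take (j - Suc i) ?ds @ xs ! j # drop (Suc j) xs"
    by metis
qed (use assms in simp_all)

lemma nth_edge_wlog_less:
  assumes "symp E" "\<And>x. \<not> E x x"
    and "\<And>i j. i < j \<Longrightarrow> j < length xs \<Longrightarrow> E (xs ! i) (xs ! j) \<Longrightarrow> P i j"
    and "i < length xs" "j < length xs" "E (xs ! i) (xs ! j)"
  shows "P i j \<or> P j i"
  using assms by (cases i j rule: linorder_cases) (auto simp: symp_def)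

lemma induced_pathI:
  assumes "walk E xs" "distinct xs" "set xs \<subseteq> V" "symp E" "\<And>x. \<not> E x x"
    and "\<And>i j. i < j \<Longrightarrow> j < length xs \<Longrightarrow> E (xs ! i) (xs ! j) \<Longrightarrow> j = i + 1"
  shows "induced_path V E xs"
  using assms nth_edge_wlog_less[of E xs "\<lambda>i j. j = i + 1"]
  unfolding induced_path_def by (auto simp: walk_conv_nth)

lemma induced_cycleI:
  assumes "3 \<le> length xs" "distinct xs" "set xs \<subseteq> V" "walk E (xs @ [hd xs])"
    and "symp E" "\<And>x. \<not> E x x"
    and "\<And>i j. i < j \<Longrightarrow> j < length xs \<Longrightarrow> E (xs ! i) (xs ! j) \<Longrightarrow>
      j = i + 1 \<or> i = 0 \<and> j = length xs - 1"
  shows "induced_cycle V E xs"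
proof -
  define k where "k = length xs - 2"
  have k: "length xs = Suc (Suc k)" using assms(1) by (simp add: k_def)
  have "j = (i + 1) mod length xs \<or> i = (j + 1) mod length xs"
    if "i < length xs" "j < length xs" "E (xs ! i) (xs ! j)" for i j
    using nth_edge_wlog_less[of E xs "\<lambda>i j. j = i + 1 \<or> i = 0 \<and> j = length xs - 1",
        OF assms(5,6,7) that] that(1,2)
    unfolding k by auto
  moreover have "xs \<noteq> []" using assms(1) by auto
  ultimately show ?thesis using assms walk_close_iff[of xs E] by (simp add: induced_cycle_def)
qed

lemma induced_path_walk: "induced_path V E xs \<Longrightarrow> walk E xs"
  by (simp add: induced_path_def walk_conv_nth)

lemma induced_odd_cycle_conflicting_walk:
  assumes "induced_cycle V E xs" "odd (length xs)"
  shows "conflicting_walk E c (xs @ [hd xs])"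
proof -
  have "xs \<noteq> []" using assms(1) by (auto simp: induced_cycle_def)
  then show ?thesis using assms walk_close_iff[of xs E]
    by (simp add: conflicting_walk_def induced_cycle_def)
qed

definition obstruction :: "'a set \<Rightarrow> ('a \<Rightarrow> 'a \<Rightarrow> bool) \<Rightarrow> ('a \<Rightarrow> bool option) \<Rightarrow> bool" where
  "obstruction V E c \<longleftrightarrow>
    (\<exists>xs. induced_path V E xs \<and> even (length xs - 1)
           \<and> colored_vertices c xs = {hd xs, last xs}
           \<and> c (hd xs) \<noteq> None \<and> c (last xs) \<noteq> None \<and> c (hd xs) \<noteq> c (last xs))
  \<or> (\<exists>xs. induced_path V E xs \<and> odd (length xs - 1)
           \<and> colored_vertices c xs = {hd xs, last xs}
           \<and> c (hd xs) \<noteq> None \<and> c (last xs) \<noteq> None \<and> c (hd xs) = c (last xs))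
  \<or> (\<exists>xs. induced_cycle V E xs \<and> odd (length xs) \<and> colored_vertices c xs = {})
  \<or> (\<exists>xs. induced_cycle V E xs \<and> odd (length xs) \<and> card (colored_vertices c xs) = 1)
  \<or> (\<exists>xs i. induced_cycle V E xs \<and> odd (length xs) \<and> i < length xs
           \<and> colored_vertices c xs = {xs!i, xs!((i+1) mod length xs)})"

lemma obstruction_imp_conflicting_walk:
  assumes "obstruction V E c"
  shows "\<exists>xs. conflicting_walk E c xs"
  using assms unfolding obstruction_def
  by (elim disjE exE conjE; (blast intro: induced_odd_cycle_conflicting_walk)?)
    (auto simp: conflicting_walk_def conflict_def dest: induced_path_walk)

section \<open>Shortest conflicting walks\<close>

locale shortest_conflicting_walk =
  fixes V :: "'a set" and E :: "'a \<Rightarrow> 'a \<Rightarrow> bool" and c :: "'a \<Rightarrow> bool option"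
    and xs :: "'a list"
  assumes graph: "simple_graph V E"
    and conflicting: "conflicting_walk E c xs"
    and shortest: "conflicting_walk E c ys \<Longrightarrow> length xs \<le> length ys"
    \<comment> \<open>Without this tie-break, a chord could cut an open walk into a closed conflicting
      walk of the same length.\<close>
    and closed_preferred: "conflicting_walk E c ys \<Longrightarrow> hd ys = last ys \<Longrightarrow> length ys = length xs \<Longrightarrow>
      hd xs = last xs"

lemma conflicting_walk_imp_shortest:
  assumes "simple_graph V E" "conflicting_walk E c ys"
  obtains xs where "shortest_conflicting_walk V E c xs"
proof -
  define weight where "weight ys = 2 * length ys + (if hd ys = last ys then 0 else 1::nat)"
    for ys :: "'a list"
  obtain xs where "conflicting_walk E c xs"
    and least: "\<And>ys. conflicting_walk E c ys \<Longrightarrow> weight xs \<le> weight ys"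
    using ex_has_least_nat[of "conflicting_walk E c" ys weight] assms(2) by blast
  have "shortest_conflicting_walk V E c xs"
  proof
    fix ys assume "conflicting_walk E c ys"
    from least[OF this] show "length xs \<le> length ys" by (auto simp: weight_def split: if_splits)
    from least[OF \<open>conflicting_walk E c ys\<close>]
    show "hd ys = last ys \<Longrightarrow> length ys = length xs \<Longrightarrow> hd xs = last xs"
      by (auto simp: weight_def split: if_splits)
  qed fact+
  then show ?thesis using that by blast
qed

context shortest_conflicting_walk
begin

lemma symp: "symp E"
  using graph by (auto simp: simple_graph_def symp_def)

lemma irreflexive: "\<not> E x x"
  using graph by (simp add: simple_graph_def)

lemma walk: "walk E xs" and conflict: "conflict c (hd xs) (last xs) (length xs - 1)"
  using conflicting by (simp_all add: conflicting_walk_def)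

lemma length_ge_2: "2 \<le> length xs"
proof -
  have "xs \<noteq> []" using walk by (simp add: walk_def)
  moreover have "length xs \<noteq> 1" using conflict by (auto simp: length_Suc_conv)
  ultimately show ?thesis by (cases xs) (auto simp: Suc_le_eq)
qed

lemma set_subset: "set xs \<subseteq> V"
  using walk_set_subset[OF graph walk length_ge_2] .

lemma closed_decomp:
  assumes "hd xs = last xs"
  shows "xs = butlast xs @ [hd (butlast xs)]" "butlast xs \<noteq> []"
proof -
  show "butlast xs \<noteq> []" using length_ge_2 by (cases xs) auto
  moreover have "xs = butlast xs @ [last xs]" using length_ge_2 by (cases xs) auto
  ultimately show "xs = butlast xs @ [hd (butlast xs)]"
    using assms hd_append2[of "butlast xs" "[last xs]"] by metis
qed

lemma interior_uncolored:
  assumes "xs = ys @ v # zs" "ys \<noteq> []" "zs \<noteq> []" "c (hd xs) \<noteq> None" "c (last xs) \<noteq> None"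
  shows "c v = None"
proof (rule ccontr)
  assume "c v \<noteq> None"
  have "walk E (ys @ [v])" "walk E (v # zs)"
    using walk walk_append_Cons[of E ys v zs] assms(1) by simp_all
  moreover have "hd (ys @ [v]) = hd xs" "last (v # zs) = last xs" using assms(1-3) by simp_all
  moreover have "conflict c (hd xs) (last xs) (length ys + length zs)"
    using conflict assms(1) by simp
  ultimately have "conflicting_walk E c (ys @ [v]) \<or> conflicting_walk E c (v # zs)"
    using conflict_split[of c "hd xs" v "last xs" "length ys" "length zs"] assms(4,5) \<open>c v \<noteq> None\<close>
    by (auto simp: conflicting_walk_def)
  then show False using shortest assms(1-3) by fastforce
qed

lemma repeated_vertex_at_ends:
  assumes "xs = ys @ v # zs @ v # ws"
  shows "ys = [] \<and> ws = []"
proof -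
  have walks: "walk E (ys @ [v])" "walk E (v # zs @ [v])" "walk E (v # ws)"
    using walk walk_append_Cons[of E ys v "zs @ v # ws"] walk_append_Cons[of E "v # zs" v ws] assms
    by simp_all
  let ?short = "ys @ v # ws"
  have "walk E ?short" using walks walk_append_Cons[of E ys v ws] by simp
  moreover have "hd ?short = hd xs" "last ?short = last xs" using assms by (cases ys; cases ws; simp)+
  moreover have len: "length xs = length ys + length zs + length ws + 2" using assms by simp
  then have "conflict c (hd xs) (last xs) (length ?short - 1) \<or> odd (length zs + 1)"
    by (intro conflict_shortcut[OF conflict]) (simp; presburger)
  ultimately have "conflicting_walk E c ?short \<or> conflicting_walk E c (v # zs @ [v])"
    using walks(2) by (auto simp: conflicting_walk_def)
  then show ?thesis using shortest[of ?short] shortest[of "v # zs @ [v]"] len by auto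
qed

lemma chord_at_ends:
  assumes "xs = ys @ u # zs @ v # ws" "E u v" "zs \<noteq> []"
  shows "ys = [] \<and> ws = [] \<or> hd xs = last xs \<and> length ys + length ws = 1"
proof -
  have walks: "walk E (ys @ [u])" "walk E (u # zs @ [v])" "walk E (v # ws)"
    using walk walk_append_Cons[of E ys u "zs @ v # ws"] walk_append_Cons[of E "u # zs" v ws] assms(1)
    by simp_all
  let ?short = "ys @ u # v # ws" and ?loop = "u # zs @ [v, u]"
  have "walk E ?short" using walks assms(2) walk_append_Cons[of E ys u "v # ws"] by simp
  moreover have "walk E ?loop"
    using walk_join[OF walks(2), of "[v, u]"] assms(2) symp by (simp add: symp_def)
  moreover have "hd ?short = hd xs" "last ?short = last xs" using assms(1) by (cases ys; cases ws; simp)+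
  moreover have len: "length xs = length ys + length zs + length ws + 2" using assms(1) by simp
  then have "conflict c (hd xs) (last xs) (length ?short - 1) \<or> odd (length zs + 2)"
    by (intro conflict_shortcut[OF conflict]) (simp; presburger)
  ultimately have "conflicting_walk E c ?short \<or> conflicting_walk E c ?loop" by (auto simp: conflicting_walk_def)
  moreover have "\<not> conflicting_walk E c ?short" using shortest[of ?short] len assms(3) by auto
  ultimately have "conflicting_walk E c ?loop" by blast
  then have "length xs \<le> length ?loop" using shortest by blast
  show ?thesis
  proof (cases "ys = [] \<and> ws = []")
    case False
    then have "1 \<le> length ys + length ws" by (auto simp: Suc_le_eq)
    then have "length ?loop = length xs" using len \<open>length xs \<le> length ?loop\<close> by simp
    then show ?thesis using closed_preferred[OF \<open>conflicting_walk E c ?loop\<close>] len by auto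
  qed simp
qed

lemma rotate_closed:
  assumes "hd xs = last xs" "butlast xs = ys @ zs" "zs \<noteq> []"
  shows "shortest_conflicting_walk V E c (zs @ ys @ [hd zs])"
proof
  have xs: "xs = ys @ zs @ [hd (ys @ zs)]"
    using closed_decomp(1)[OF assms(1)] unfolding assms(2) by simp
  then have "walk E (zs @ ys @ [hd zs])" using walk walk_rotate[of E ys zs] assms(3) by simp
  moreover have "odd (length xs - 1)" using conflict assms(1) by simp
  moreover have len: "length (zs @ ys @ [hd zs]) = length xs" using xs by simp
  ultimately show "conflicting_walk E c (zs @ ys @ [hd zs])" using assms(3) by (simp add: conflicting_walk_def)
  fix ys' assume "conflicting_walk E c ys'"
  then show "length (zs @ ys @ [hd zs]) \<le> length ys'" using shortest len by simp
qed (use graph assms(3) in simp_all)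

lemma closed_distinct:
  assumes "hd xs = last xs"
  shows "distinct (butlast xs)"
proof (rule ccontr)
  assume "\<not> distinct (butlast xs)"
  then obtain as v bs cs where "butlast xs = as @ [v] @ bs @ [v] @ cs"
    using not_distinct_decomp by blast
  then have "xs = as @ v # bs @ v # (cs @ [hd (butlast xs)])"
    using closed_decomp[OF assms] by simp
  then show False using repeated_vertex_at_ends by blast
qed

lemma closed_no_chord:
  assumes "hd xs = last xs" "i < j" "j < length (butlast xs)" "E (butlast xs ! i) (butlast xs ! j)"
  shows "j = i + 1 \<or> i = 0 \<and> j = length (butlast xs) - 1"
proof -
  obtain as bs cs where t: "butlast xs = as @ butlast xs ! i # bs @ butlast xs ! j # cs"
    and len: "length as = i" "length bs = j - Suc i" "length cs = length (butlast xs) - Suc j"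
    using split_list_at_two_positions[OF assms(2,3)] by blast
  show ?thesis
  proof (cases "bs = []")
    case False
    have "xs = as @ butlast xs ! i # bs @ butlast xs ! j # (cs @ [hd (butlast xs)])"
      using closed_decomp(1)[OF assms(1)] t by (metis append_Cons append_assoc)
    then have "as = [] \<and> cs = []" using chord_at_ends assms(4) False by fastforce
    then show ?thesis using len assms(2,3) by auto
  qed (use len assms(2) in auto)
qed

lemma closed_induced_cycle:
  assumes "hd xs = last xs"
  shows "induced_cycle V E (butlast xs)" "odd (length (butlast xs))"
proof -
  let ?t = "butlast xs"
  show odd: "odd (length ?t)" using conflict assms by simp
  have "length ?t \<noteq> 1"
  proof
    assume "length ?t = 1"
    then obtain x where "?t = [x]" by (metis One_nat_def length_0_conv length_Suc_conv)
    then have "xs = [x, x]" using closed_decomp(1)[OF assms] by simp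
    then show False using walk irreflexive by simp
  qed
  with odd have "3 \<le> length ?t" by presburger
  moreover have "set ?t \<subseteq> V" using set_subset by (auto dest: in_set_butlastD)
  moreover have "walk E (?t @ [hd ?t])" using walk closed_decomp(1)[OF assms] by simp
  ultimately show "induced_cycle V E ?t"
    using induced_cycleI closed_distinct[OF assms] symp irreflexive closed_no_chord[OF assms] by blast
qed

lemma closed_one_colored:
  assumes "hd xs = last xs" "u \<in> colored_vertices c (butlast xs)"
  shows "colored_vertices c (butlast xs) = {u}"
proof -
  let ?t = "butlast xs"
  have "u \<in> set ?t" "c u \<noteq> None" using assms(2) by (simp_all add: colored_vertices_def)
  then obtain ys zs where t: "?t = ys @ u # zs" using split_list by metis
  \<comment> \<open>Rotated to start at \<open>u\<close>, the cycle has all its other vertices in its interior.\<close>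
  interpret rotated: shortest_conflicting_walk V E c "(u # zs) @ ys @ [u]"
    using rotate_closed[OF assms(1), of ys "u # zs"] t by simp
  have "v = u" if "v \<in> set ?t" "c v \<noteq> None" for v
  proof (rule ccontr)
    assume "v \<noteq> u"
    then have "v \<in> set (zs @ ys)" using that(1) t by auto
    then obtain as bs where "zs @ ys = as @ v # bs" using split_list by metis
    then have "(u # zs) @ ys @ [u] = (u # as) @ v # (bs @ [u])" by simp
    then show False
      using rotated.interior_uncolored[of "u # as" v "bs @ [u]"] \<open>c u \<noteq> None\<close> that(2) by simp
  qed
  then show ?thesis using assms(2) by (auto simp: colored_vertices_def)
qed

lemma open_colored:
  assumes "hd xs \<noteq> last xs"
  shows "colored_vertices c xs = {hd xs, last xs}" "c (hd xs) \<noteq> None" "c (last xs) \<noteq> None"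
proof -
  show ends: "c (hd xs) \<noteq> None" "c (last xs) \<noteq> None" using conflict assms by (auto simp: conflict_def)
  have only_ends: "v = hd xs \<or> v = last xs" if "v \<in> set xs" "c v \<noteq> None" for v
  proof (rule ccontr)
    assume interior: "\<not> (v = hd xs \<or> v = last xs)"
    obtain ys zs where xs: "xs = ys @ v # zs" using \<open>v \<in> set xs\<close> split_list by metis
    have "ys \<noteq> []" using interior xs by (cases ys) auto
    moreover have "zs \<noteq> []" using interior xs by (cases zs) auto
    ultimately show False using interior_uncolored[OF xs] ends \<open>c v \<noteq> None\<close> by blast
  qed
  have "hd xs \<in> set xs" "last xs \<in> set xs" using walk by (simp_all add: walk_def)
  then show "colored_vertices c xs = {hd xs, last xs}"
    unfolding colored_vertices_def using ends only_ends by blast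
qed

lemma open_distinct:
  assumes "hd xs \<noteq> last xs"
  shows "distinct xs"
proof (rule ccontr)
  assume "\<not> distinct xs"
  then obtain as v bs cs where xs: "xs = as @ [v] @ bs @ [v] @ cs"
    using not_distinct_decomp by blast
  then have "as = [] \<and> cs = []" using repeated_vertex_at_ends by simp
  then show False using xs assms by simp
qed

lemma open_no_chord:
  assumes "hd xs \<noteq> last xs" "i < j" "j < length xs" "E (xs ! i) (xs ! j)"
  shows "j = i + 1 \<or> i = 0 \<and> j = length xs - 1"
proof -
  obtain as bs cs where xs: "xs = as @ xs ! i # bs @ xs ! j # cs"
    and len: "length as = i" "length bs = j - Suc i" "length cs = length xs - Suc j"
    using split_list_at_two_positions[OF assms(2,3)] by blast
  show ?thesis
  proof (cases "bs = []")
    case False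
    then have "as = [] \<and> cs = []" using chord_at_ends[OF xs] assms(1,4) by blast
    then show ?thesis using len assms(2,3) by auto
  qed (use len assms(2) in auto)
qed

lemma open_induced_path:
  assumes "hd xs \<noteq> last xs" "\<not> E (hd xs) (last xs)"
  shows "induced_path V E xs"
proof (rule induced_pathI[OF walk open_distinct[OF assms(1)] set_subset symp irreflexive])
  fix i j assume ij: "i < j" "j < length xs" "E (xs ! i) (xs ! j)"
  have "xs ! 0 = hd xs" "xs ! (length xs - 1) = last xs"
    using walk by (simp_all add: walk_def hd_conv_nth last_conv_nth)
  then show "j = i + 1" using open_no_chord[OF assms(1) ij] ij(3) assms(2) by auto
qed

lemma open_induced_cycle:
  assumes "proper_partial_2col V E c" "hd xs \<noteq> last xs" "E (hd xs) (last xs)"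
  shows "induced_cycle V E xs" "odd (length xs)"
proof -
  have "c (hd xs) \<noteq> c (last xs)"
    using assms open_colored(2,3)[OF assms(2)] by (simp add: proper_partial_2col_def)
  moreover have "xs \<noteq> []" using walk by (simp add: walk_def)
  ultimately show odd: "odd (length xs)" using conflict by (simp add: conflict_def)
  then have "3 \<le> length xs" using length_ge_2 by presburger
  moreover have "walk E (xs @ [hd xs])"
    using walk_join[OF walk, of "[last xs, hd xs]"] assms(3) symp by (simp add: symp_def)
  ultimately show "induced_cycle V E xs"
    using induced_cycleI open_distinct[OF assms(2)] set_subset symp irreflexive
      open_no_chord[OF assms(2)] by blast
qed

lemma obstruction:
  assumes "proper_partial_2col V E c"
  shows "obstruction V E c"
proof (cases "hd xs = last xs")
  case True
  note cycle = closed_induced_cycle[OF True]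
  show ?thesis
  proof (cases "colored_vertices c (butlast xs) = {}")
    case False
    then obtain u where "u \<in> colored_vertices c (butlast xs)" by blast
    then have "card (colored_vertices c (butlast xs)) = 1" by (simp add: closed_one_colored[OF True])
    then show ?thesis using cycle unfolding obstruction_def by blast
  qed (use cycle in \<open>auto simp: obstruction_def\<close>)
next
  case False
  note ends = open_colored[OF False]
  show ?thesis
  proof (cases "E (hd xs) (last xs)")
    case True
    let ?i = "length xs - 1"
    have "?i < length xs" "xs ! ?i = last xs" "xs ! ((?i + 1) mod length xs) = hd xs"
      using walk by (simp_all add: walk_def hd_conv_nth last_conv_nth)
    then have "colored_vertices c xs = {xs ! ?i, xs ! ((?i + 1) mod length xs)}"
      "?i < length xs" using ends(1) by auto
    then show ?thesis using open_induced_cycle[OF assms False True]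
      unfolding obstruction_def by blast
  next
    case nonadjacent: False
    then show ?thesis using open_induced_path[OF False nonadjacent] ends conflict
      unfolding obstruction_def conflict_def by blast
  qed
qed

end

lemma conflicting_walk_iff_obstruction:
  assumes "simple_graph V E" "proper_partial_2col V E c"
  shows "(\<exists>xs. conflicting_walk E c xs) \<longleftrightarrow> obstruction V E c"
proof
  assume "\<exists>xs. conflicting_walk E c xs"
  then obtain xs where "shortest_conflicting_walk V E c xs"
    using conflicting_walk_imp_shortest[OF assms(1)] by blast
  then show "obstruction V E c" using shortest_conflicting_walk.obstruction assms(2) by blast
qed (rule obstruction_imp_conflicting_walk)

theorem mainTheorem1:
  fixes V :: "'a set" and E :: "'a \<Rightarrow> 'a \<Rightarrow> bool" and c :: "'a \<Rightarrow> bool option"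
  assumes "simple_graph V E" and "connected_graph V E" and "proper_partial_2col V E c"
  shows "extends_to_proper_2col V E c \<longleftrightarrow>
    (\<not> (\<exists>xs. induced_path V E xs \<and> even (length xs - 1)
           \<and> colored_vertices c xs = {hd xs, last xs}
           \<and> c (hd xs) \<noteq> None \<and> c (last xs) \<noteq> None \<and> c (hd xs) \<noteq> c (last xs)))
  \<and> (\<not> (\<exists>xs. induced_path V E xs \<and> odd (length xs - 1)
           \<and> colored_vertices c xs = {hd xs, last xs}
           \<and> c (hd xs) \<noteq> None \<and> c (last xs) \<noteq> None \<and> c (hd xs) = c (last xs)))
  \<and> (\<not> (\<exists>xs. induced_cycle V E xs \<and> odd (length xs) \<and> colored_vertices c xs = {}))
  \<and> (\<not> (\<exists>xs. induced_cycle V E xs \<and> odd (length xs) \<and> card (colored_vertices c xs) = 1))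
  \<and> (\<not> (\<exists>xs i. induced_cycle V E xs \<and> odd (length xs) \<and> i < length xs
           \<and> colored_vertices c xs = {xs!i, xs!((i+1) mod length xs)}))"
proof -
  have "extends_to_proper_2col V E c \<longleftrightarrow> \<not> obstruction V E c"
    using extension_iff_no_conflicting_walk[OF assms(1,2)] conflicting_walk_iff_obstruction[OF assms(1,3)]
    by blast
  then show ?thesis unfolding obstruction_def de_Morgan_disj .
qed

end
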